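(* Let $\xi$ be an incompatibility witness of the form $$\xi(\mathsf B_1,\dots,\mathsf B_n)=\delta-\sum_{j=1}^n\sum_{x_j=1}^{m_j}c_{j,x_j}\mathrm{Tr}[\varrho_{j,x_j}\mathsf B_j(x_j)],$$ with $\delta,c_{j,x_j}\in\mathbb R$ and states $\varrho_{j,x_j}$, and suppose $\xi$ detects the incompatibility of observables $\mathsf A_1,\dots,\mathsf A_n$. Then $\mathsf A_1,\dots,\mathsf A_n$ are $\mathcal S_0$-incompatible for $\mathcal S_0=\{\varrho_{j,x_j}:j=1,\dots,n,\ x_j=1,\dots,m_j\}$.
   Context: Observables are POVMs on a finite-dimensional Hilbert space; $\mathsf A_j$ and $\mathsf B_j$ have outcome set $\{1,\dots,m_j\}$. Observables $\mathsf A_1,\dots,\mathsf A_n$ are compatible if there is a joint observable $\mathsf G$ on the product outcome set with $\mathsf A_j(x_j)=\sum_{x_l,l\neq j}\mathsf G(x_1,\dots,x_n)$ for all $j$; otherwise incompatible. An incompatibility witness is an affine functional $\xi$ on $n$-tuples of observables (with fixed outcome numbers $m_1,\dots,m_n$) that is nonnegative on all compatible $n$-tuples and negative on at least one incompatible $n$-tuple; it detects the incompatibility of $\mathsf A_1,\dots,\mathsf A_n$ if $\xi(\mathsf A_1,\dots,\mathsf A_n)<0$. For a set of states $\mathcal S_0$, observables are $\mathcal S_0$-compatible if there exist compatible observables $\mathsf A'_j$ (same outcome sets) with $\mathrm{Tr}[\varrho\mathsf A'_j(x)]=\mathrm{Tr}[\varrho\mathsf A_j(x)]$ for all $j,x,\varrho\in\mathcal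 S_0$; otherwise $\mathcal S_0$-incompatible. *)

theory Defs
  imports "HOL-Analysis.Analysis"
begin

type_synonym 'd op = "complex ^'d ^'d"

definition trace :: "'d::finite op \<Rightarrow> complex" where
  "trace A = (\<Sum>i\<in>UNIV. A $ i $ i)"

definition positive_op :: "'d::finite op \<Rightarrow> bool" where
  "positive_op A \<longleftrightarrow> (\<forall>v::complex^'d.
      let q = (\<Sum>i\<in>UNIV. \<Sum>k\<in>UNIV. cnj (v $ i) * A $ i $ k * v $ k)
      in Im q = 0 \<and> Re q \<ge> 0)"

definition state :: "'d::finite op \<Rightarrow> bool" where
  "state \<rho> \<longleftrightarrow> positive_op \<rho> \<and> trace \<rho> = 1"

text \<open>A POVM with outcome set \<open>X\<close> (only its values on \<open>X\<close> matter).\<close>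
definition povm_on :: "'x set \<Rightarrow> ('x \<Rightarrow> 'd::finite op) \<Rightarrow> bool" where
  "povm_on X E \<longleftrightarrow> finite X \<and> (\<forall>x\<in>X. positive_op (E x)) \<and> (\<Sum>x\<in>X. E x) = mat 1"

definition observable :: "nat \<Rightarrow> (nat \<Rightarrow> 'd::finite op) \<Rightarrow> bool" where
  "observable m A \<longleftrightarrow> povm_on {1..m} A"

definition observables :: "nat \<Rightarrow> (nat \<Rightarrow> nat) \<Rightarrow> (nat \<Rightarrow> nat \<Rightarrow> 'd::finite op) \<Rightarrow> bool" where
  "observables n m A \<longleftrightarrow> (\<forall>j\<in>{1..n}. observable (m j) (A j))"

definition outcomes :: "nat \<Rightarrow> (nat \<Rightarrow> nat) \<Rightarrow> (nat \<Rightarrow> nat) set" where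
  "outcomes n m = PiE {1..n} (\<lambda>j. {1..m j})"

definition joint_observable ::
  "nat \<Rightarrow> (nat \<Rightarrow> nat) \<Rightarrow> (nat \<Rightarrow> nat \<Rightarrow> 'd::finite op) \<Rightarrow> ((nat \<Rightarrow> nat) \<Rightarrow> 'd op) \<Rightarrow> bool" where
  "joint_observable n m A G \<longleftrightarrow> povm_on (outcomes n m) G \<and>
     (\<forall>j\<in>{1..n}. \<forall>y\<in>{1..m j}. A j y = (\<Sum>x\<in>{x\<in>outcomes n m. x j = y}. G x))"

definition compatible :: "nat \<Rightarrow> (nat \<Rightarrow> nat) \<Rightarrow> (nat \<Rightarrow> nat \<Rightarrow> 'd::finite op) \<Rightarrow> bool" where
  "compatible n m A \<longleftrightarrow> observables n m A \<and> (\<exists>G. joint_observable n m A G)"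

definition incompatibility_witness ::
  "nat \<Rightarrow> (nat \<Rightarrow> nat) \<Rightarrow> ((nat \<Rightarrow> nat \<Rightarrow> 'd::finite op) \<Rightarrow> real) \<Rightarrow> bool" where
  "incompatibility_witness n m \<xi> \<longleftrightarrow>
     (\<forall>B. compatible n m B \<longrightarrow> \<xi> B \<ge> 0) \<and>
     (\<exists>B. observables n m B \<and> \<not> compatible n m B \<and> \<xi> B < 0)"

definition S0_compatible ::
  "'d::finite op set \<Rightarrow> nat \<Rightarrow> (nat \<Rightarrow> nat) \<Rightarrow> (nat \<Rightarrow> nat \<Rightarrow> 'd op) \<Rightarrow> bool" where
  "S0_compatible S0 n m A \<longleftrightarrow> (\<exists>A'. compatible n m A' \<and>
     (\<forall>j\<in>{1..n}. \<forall>x\<in>{1..m j}. \<forall>\<rho>\<in>S0. trace (\<rho> ** A' j x) = trace (\<rho> ** A j x)))"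

end

theory Submission
  imports Defs
begin

text \<open>A witness of this form sees a tuple of observables only through the
  statistics \<open>Tr[\<rho> B j x]\<close> with \<open>\<rho>\<close> in \<open>\<S>\<^sub>0\<close>. An \<open>\<S>\<^sub>0\<close>-compatible tuple
  has the same statistics as some compatible tuple, on which the witness is
  nonnegative; so a tuple detected by the witness cannot be \<open>\<S>\<^sub>0\<close>-compatible.\<close>

lemma S0_compatible_imp_nonneg:
  assumes "S0_compatible S0 n m A"
    and nonneg: "\<forall>B. compatible n m B \<longrightarrow> \<xi> B \<ge> 0"
    and determined: "\<And>B. \<forall>j\<in>{1..n}. \<forall>x\<in>{1..m j}. \<forall>\<rho>\<in>S0.
        trace (\<rho> ** B j x) = trace (\<rho> ** A j x) \<Longrightarrow> \<xi> B = \<xi> A"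
  shows "\<xi> A \<ge> 0"
proof -
  obtain A' where "compatible n m A'"
    and "\<forall>j\<in>{1..n}. \<forall>x\<in>{1..m j}. \<forall>\<rho>\<in>S0. trace (\<rho> ** A' j x) = trace (\<rho> ** A j x)"
    using assms(1) unfolding S0_compatible_def by blast
  with nonneg determined show ?thesis by metis
qed

lemma affine_functional_eq_if_statistics_eq:
  fixes \<rho> :: "nat \<Rightarrow> nat \<Rightarrow> 'd::finite op"
  assumes xi_def: "\<forall>B. \<xi> B = \<delta> - (\<Sum>j\<in>{1..n}. \<Sum>x\<in>{1..m j}. c j x * Re (trace (\<rho> j x ** B j x)))"
    and same: "\<forall>j\<in>{1..n}. \<forall>x\<in>{1..m j}. trace (\<rho> j x ** B j x) = trace (\<rho> j x ** A j x)"
  shows "\<xi> B = \<xi> A"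
  unfolding xi_def[rule_format] using same by (intro arg_cong[where f="\<lambda>t. \<delta> - t"] sum.cong) simp_all

theorem proposition4p3:
  fixes n :: nat and m :: "nat \<Rightarrow> nat"
    and \<delta> :: real and c :: "nat \<Rightarrow> nat \<Rightarrow> real"
    and \<rho> :: "nat \<Rightarrow> nat \<Rightarrow> 'd::finite op"
    and A :: "nat \<Rightarrow> nat \<Rightarrow> 'd op"
    and \<xi> :: "(nat \<Rightarrow> nat \<Rightarrow> 'd op) \<Rightarrow> real"
  assumes states: "\<forall>j\<in>{1..n}. \<forall>x\<in>{1..m j}. state (\<rho> j x)"
    and xi_def: "\<forall>B. \<xi> B = \<delta> - (\<Sum>j\<in>{1..n}. \<Sum>x\<in>{1..m j}. c j x * Re (trace (\<rho> j x ** B j x)))"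
    and witness: "incompatibility_witness n m \<xi>"
    and obs: "observables n m A"
    and detects: "\<xi> A < 0"
  shows "\<not> S0_compatible {\<rho> j x | j x. j \<in> {1..n} \<and> x \<in> {1..m j}} n m A"
proof
  let ?S0 = "{\<rho> j x | j x. j \<in> {1..n} \<and> x \<in> {1..m j}}"
  assume "S0_compatible ?S0 n m A"
  moreover have "\<forall>B. compatible n m B \<longrightarrow> \<xi> B \<ge> 0"
    using witness unfolding incompatibility_witness_def by blast
  moreover have "\<xi> B = \<xi> A"
    if "\<forall>j\<in>{1..n}. \<forall>x\<in>{1..m j}. \<forall>r\<in>?S0. trace (r ** B j x) = trace (r ** A j x)" for B
    using that by (intro affine_functional_eq_if_statistics_eq[OF xi_def]) blast
  ultimately have "\<xi> A \<ge> 0" by (rule S0_compatible_imp_nonneg)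
  with detects show False by simp
qed

end
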